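(* Let $O=(o_{i,j})_{i,j=1}^k$ be a real $k\times k$ matrix, let $\alpha_{i,j}=o_{i,j}-o_{k,j}$ for $i=1,\ldots,k-1$, $j=1,\ldots,k$, and let $A$ be the $k\times k$ matrix whose first $k-1$ rows are $(\alpha_{i,1},\ldots,\alpha_{i,k})$, $i=1,\ldots,k-1$, and whose last row is $(1,\ldots,1)$. Suppose $A$ is invertible and let $\Lambda=(\Lambda_{i,j})=A^{-1}$. Assume (i) $o_{ii}>o_{ji}\ge 0$ for all $i\ne j$; (ii) $\Lambda_{i,k}>0$ for all $i=1,\ldots,k$; (iii) $\sum_{j=1}^k o_{i,j}\Lambda_{j,k}>1$ for all $i=1,\ldots,k-1$. Then $\mathbf{f}^D=(f^D_1,\ldots,f^D_k)$ with $f^D_j=\Lambda_{j,k}$ is a Dutch book solution, and for every $\mathbf{p}$ in the simplex and every $i$, $$G(\mathbf{f}^D)=\prod_{l=1}^k\Big(\sum_{j=1}^k o_{l,j}f^D_j\Big)^{p_l}=\sum_{j=1}^k o_{i,j}\Lambda_{j,k}.$$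
   Context: $\Delta_{k-1}=\{\mathbf{x}\in[0,1]^k: x_1+\cdots+x_k=1\}$. For $\mathbf{f}\in\Delta_{k-1}$, $\overline{o}_i(\mathbf{f})=\sum_{j=1}^k o_{i,j}f_j$, and for $\mathbf{p}\in\Delta_{k-1}$, $G(\mathbf{f})=\prod_{i=1}^k\overline{o}_i(\mathbf{f})^{p_i}$. A Dutch book solution is an $\mathbf{f}\in\Delta_{k-1}$ with $\overline{o}_1(\mathbf{f})=\overline{o}_2(\mathbf{f})=\cdots=\overline{o}_k(\mathbf{f})>1$. *)

theory Defs
  imports "HOL-Analysis.Analysis"
begin

(* Matrices and vectors are indexed by {1..k}, represented as functions on nat. *)

definition prob_simplex :: "nat \<Rightarrow> (nat \<Rightarrow> real) set" where
  "prob_simplex k = {x. (\<forall>j\<in>{1..k}. 0 \<le> x j \<and> x j \<le> 1) \<and> (\<Sum>j=1..k. x j) = 1}"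

definition obar :: "nat \<Rightarrow> (nat \<Rightarrow> nat \<Rightarrow> real) \<Rightarrow> (nat \<Rightarrow> real) \<Rightarrow> nat \<Rightarrow> real" where
  "obar k o' f i = (\<Sum>j=1..k. o' i j * f j)"

definition G :: "nat \<Rightarrow> (nat \<Rightarrow> nat \<Rightarrow> real) \<Rightarrow> (nat \<Rightarrow> real) \<Rightarrow> (nat \<Rightarrow> real) \<Rightarrow> real" where
  "G k o' p f = (\<Prod>i=1..k. obar k o' f i powr p i)"

definition dutch_book_solution :: "nat \<Rightarrow> (nat \<Rightarrow> nat \<Rightarrow> real) \<Rightarrow> (nat \<Rightarrow> real) \<Rightarrow> bool" where
  "dutch_book_solution k o' f \<longleftrightarrow> f \<in> prob_simplex k \<and>
     (\<forall>i\<in>{1..k}. obar k o' f i = obar k o' f 1) \<and> obar k o' f 1 > 1"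

definition Amat :: "nat \<Rightarrow> (nat \<Rightarrow> nat \<Rightarrow> real) \<Rightarrow> nat \<Rightarrow> nat \<Rightarrow> real" where
  "Amat k o' i j = (if i = k then 1 else o' i j - o' k j)"

definition is_inverse :: "nat \<Rightarrow> (nat \<Rightarrow> nat \<Rightarrow> real) \<Rightarrow> (nat \<Rightarrow> nat \<Rightarrow> real) \<Rightarrow> bool" where
  "is_inverse k M L \<longleftrightarrow>
     (\<forall>i\<in>{1..k}. \<forall>j\<in>{1..k}. (\<Sum>l=1..k. M i l * L l j) = (if i = j then 1 else 0)) \<and>
     (\<forall>i\<in>{1..k}. \<forall>j\<in>{1..k}. (\<Sum>l=1..k. L i l * M l j) = (if i = j then 1 else 0))"

end

theory Submission
  imports Defs
begin

text \<open>The last column \<open>f\<close> of \<open>\<Lambda> = A\<inverse>\<close> solves \<open>A f = e\<^sub>k\<close>: the last row says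
  that \<open>f\<close> sums to one, and row \<open>i < k\<close> says \<open>obar\<^sub>i(f) = obar\<^sub>k(f)\<close>. Positivity (ii) then
  puts \<open>f\<close> in the simplex and (iii) makes the common value exceed one. Since all factors of
  \<open>G(f)\<close> share this value \<open>c\<close> and the exponents sum to one, \<open>G(f) = c\<close>.\<close>

lemma is_inverse_mult_right:
  assumes "is_inverse k M L" and "i \<in> {1..k}" and "j \<in> {1..k}"
  shows "(\<Sum>l=1..k. M i l * L l j) = (if i = j then 1 else 0)"
  using assms unfolding is_inverse_def by blast

lemma obar_eq_obar_last_if_Amat_row_zero:
  assumes "i \<noteq> k" and "(\<Sum>l=1..k. Amat k o' i l * f l) = 0"
  shows "obar k o' f i = obar k o' f k"
proof -
  have "(\<Sum>l=1..k. (o' i l - o' k l) * f l) = 0"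
    using assms by (simp add: Amat_def)
  then show ?thesis
    unfolding obar_def by (simp add: left_diff_distrib sum_subtractf)
qed

lemma nonneg_sum_eq_1_in_prob_simplex:
  assumes nonneg: "\<forall>j\<in>{1..k}. 0 \<le> x j" and sum: "(\<Sum>j=1..k. x j) = 1"
  shows "x \<in> prob_simplex k"
proof -
  have "x j \<le> 1" if "j \<in> {1..k}" for j
  proof -
    have "x j \<le> (\<Sum>l=1..k. x l)"
      using nonneg that by (intro member_le_sum) auto
    then show ?thesis using sum by simp
  qed
  then show ?thesis
    unfolding prob_simplex_def using nonneg sum by simp
qed

lemma prod_powr_prob_simplex:
  assumes "0 < c" and "p \<in> prob_simplex k"
  shows "(\<Prod>i=1..k. c powr p i) = c"
proof -
  have "(\<Prod>i=1..k. c powr p i) = c powr (\<Sum>i=1..k. p i)"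
    using assms(1) by (simp add: powr_sum)
  also have "\<dots> = c"
    using assms unfolding prob_simplex_def by simp
  finally show ?thesis .
qed

lemma G_eq_common_obar:
  assumes "\<And>i. i \<in> {1..k} \<Longrightarrow> obar k o' f i = c" and "0 < c" and "p \<in> prob_simplex k"
  shows "G k o' p f = c"
proof -
  have "G k o' p f = (\<Prod>i=1..k. c powr p i)"
    unfolding G_def using assms(1) by (intro prod.cong) auto
  then show ?thesis
    using prod_powr_prob_simplex[OF assms(2,3)] by simp
qed

theorem lemma1:
  fixes k :: nat and o' \<Lambda> :: "nat \<Rightarrow> nat \<Rightarrow> real"
  assumes k2: "k \<ge> 2"
    and inv: "is_inverse k (Amat k o') \<Lambda>"
    and i: "\<forall>i\<in>{1..k}. \<forall>j\<in>{1..k}. i \<noteq> j \<longrightarrow> o' i i > o' j i \<and> o' j i \<ge> 0"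
    and ii: "\<forall>i\<in>{1..k}. \<Lambda> i k > 0"
    and iii: "\<forall>i\<in>{1..k-1}. (\<Sum>j=1..k. o' i j * \<Lambda> j k) > 1"
  shows "dutch_book_solution k o' (\<lambda>j. \<Lambda> j k) \<and>
         (\<forall>p\<in>prob_simplex k. \<forall>i\<in>{1..k}.
            G k o' p (\<lambda>j. \<Lambda> j k) = (\<Sum>j=1..k. o' i j * \<Lambda> j k))"
proof -
  define f where "f = (\<lambda>j. \<Lambda> j k)"
  define c where "c = obar k o' f k"
  have k_mem: "k \<in> {1..k}"
    using k2 by simp
  have column: "(\<Sum>l=1..k. Amat k o' i l * f l) = (if i = k then 1 else 0)" if "i \<in> {1..k}" for i
    unfolding f_def using is_inverse_mult_right[OF inv that k_mem] .
  have common: "obar k o' f i = c" if "i \<in> {1..k}" for i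
  proof (cases "i = k")
    case False
    then show ?thesis
      unfolding c_def using column[OF that] by (intro obar_eq_obar_last_if_Amat_row_zero) simp_all
  qed (simp add: c_def)
  have "\<forall>j\<in>{1..k}. 0 \<le> f j"
    using ii unfolding f_def by (simp add: order.strict_implies_order)
  moreover have "(\<Sum>l=1..k. f l) = 1"
    using column[OF k_mem] by (simp add: Amat_def)
  ultimately have simplex: "f \<in> prob_simplex k"
    by (rule nonneg_sum_eq_1_in_prob_simplex)
  have one: "1 \<in> {1..k}" "1 \<in> {1..k-1}"
    using k2 by auto
  have "1 < obar k o' f 1"
    using iii one(2) unfolding obar_def f_def by simp
  then have c_gt_1: "1 < c"
    using common one(1) by simp
  have "dutch_book_solution k o' f"
    unfolding dutch_book_solution_def using simplex common c_gt_1 one(1) by auto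
  moreover have "G k o' p f = obar k o' f i" if "p \<in> prob_simplex k" "i \<in> {1..k}" for p i
    using G_eq_common_obar[OF common _ that(1)] c_gt_1 common that(2) by simp
  ultimately show ?thesis
    unfolding f_def obar_def by blast
qed

end
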